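(* Let $v$ be an integrable function on $[0,\infty)$ satisfying $m\le v(x)\le M$ for all $x\in[0,\infty)$, where $m,M\in\mathbb{R}$. Then for all $x>0$, $\alpha>0$, $\rho>0$, $\delta>0$ and $\beta,\eta,k,\lambda\in\mathbb{R}$, $$M\,\Lambda^{\rho,\beta}_{x,k}(\alpha,\eta)\,{}^{\rho}\mathcal{J}^{\delta,\lambda}_{\eta,k}v(x)+m\,\Lambda^{\rho,\lambda}_{x,k}(\delta,\eta)\,{}^{\rho}\mathcal{J}^{\alpha,\beta}_{\eta,k}v(x)\ \ge\ {}^{\rho}\mathcal{J}^{\alpha,\beta}_{\eta,k}v(x)\,{}^{\rho}\mathcal{J}^{\delta,\lambda}_{\eta,k}v(x)+mM\,\Lambda^{\rho,\beta}_{x,k}(\alpha,\eta)\,\Lambda^{\rho,\lambda}_{x,k}(\delta,\eta).$$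
   Context: For a function $f$ on $[0,\infty)$, $x>0$, $\alpha>0$, $\rho>0$ and $\beta,\eta,k\in\mathbb{R}$, the generalized Katugampola fractional integral is $${}^{\rho}\mathcal{J}^{\alpha,\beta}_{\eta,k}f(x)=\frac{\rho^{1-\beta}x^{k}}{\Gamma(\alpha)}\int_0^x\frac{\tau^{\rho(\eta+1)-1}}{(x^\rho-\tau^\rho)^{1-\alpha}}f(\tau)\,d\tau,$$ defined whenever the integral exists; all such integrals appearing are assumed to exist. Also $$\Lambda^{\rho,\beta}_{x,k}(\alpha,\eta)=\frac{\Gamma(\eta+1)}{\Gamma(\eta+\alpha+1)}\rho^{-\beta}x^{k+\rho(\eta+\alpha)}.$$ *)

theory Defs
  imports "HOL-Analysis.Analysis"
begin

definition katu_kernel :: "real \<Rightarrow> real \<Rightarrow> real \<Rightarrow> real \<Rightarrow> real \<Rightarrow> real" where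
  "katu_kernel \<rho> \<alpha> \<eta> x \<tau> =
     \<tau> powr (\<rho> * (\<eta> + 1) - 1) / (x powr \<rho> - \<tau> powr \<rho>) powr (1 - \<alpha>)"

definition katuJ :: "real \<Rightarrow> real \<Rightarrow> real \<Rightarrow> real \<Rightarrow> real \<Rightarrow> (real \<Rightarrow> real) \<Rightarrow> real \<Rightarrow> real" where
  "katuJ \<rho> \<alpha> \<beta> \<eta> k f x =
     \<rho> powr (1 - \<beta>) * x powr k / Gamma \<alpha> *
     (LINT \<tau>:{0..x}|lborel. katu_kernel \<rho> \<alpha> \<eta> x \<tau> * f \<tau>)"

definition katuLambda :: "real \<Rightarrow> real \<Rightarrow> real \<Rightarrow> real \<Rightarrow> real \<Rightarrow> real \<Rightarrow> real" where
  "katuLambda \<rho> \<beta> x k \<alpha> \<eta> =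
     Gamma (\<eta> + 1) / Gamma (\<eta> + \<alpha> + 1) * \<rho> powr (- \<beta>) * x powr (k + \<rho> * (\<eta> + \<alpha>))"

end

(* Both fractional integrals are positive linear functionals of v that return c * Lambda on the
   constant c: the substitution tau = x u^(1/rho) turns the integral of the kernel into the Beta
   integral B(eta + 1, alpha), and integrability of the kernel at 0 forces eta > -1. Hence
   m Lambda <= J v <= M Lambda for both orders, and the inequality is the expansion of
   (M Lambda_alpha - J^alpha v) (J^delta v - m Lambda_delta) >= 0. *)
theory Submission
  imports Defs
begin

lemma katu_kernel_nonneg: "0 \<le> katu_kernel \<rho> \<alpha> \<eta> x \<tau>"
  by (simp add: katu_kernel_def)

lemma katu_kernel_substitution:
  fixes \<rho> \<alpha> \<eta> x u :: real
  assumes x: "x > 0" and \<rho>: "\<rho> > 0" and u: "0 < u" "u < 1"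
  shows "katu_kernel \<rho> \<alpha> \<eta> x (x * u powr (1/\<rho>)) * (x / \<rho> * u powr (1/\<rho> - 1))
       = x powr (\<rho> * (\<eta> + \<alpha>)) / \<rho> * (u powr \<eta> * (1 - u) powr (\<alpha> - 1))"
proof -
  have num: "(x * u powr (1/\<rho>)) powr (\<rho> * (\<eta> + 1) - 1)
      = x powr (\<rho> * (\<eta> + 1) - 1) * u powr ((\<rho> * (\<eta> + 1) - 1) / \<rho>)"
    using x u by (simp add: powr_mult powr_powr)
  have "x powr \<rho> - (x * u powr (1/\<rho>)) powr \<rho> = x powr \<rho> * (1 - u)"
    using x u \<rho> by (simp add: powr_mult powr_powr algebra_simps)
  then have den: "(x powr \<rho> - (x * u powr (1/\<rho>)) powr \<rho>) powr (1 - \<alpha>)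
      = x powr (\<rho> * (1 - \<alpha>)) * (1 - u) powr (1 - \<alpha>)"
    using x u by (simp add: powr_mult powr_powr)
  have "katu_kernel \<rho> \<alpha> \<eta> x (x * u powr (1/\<rho>)) * (x / \<rho> * u powr (1/\<rho> - 1))
      = (x powr (\<rho> * (\<eta> + 1) - 1) * x powr (- (\<rho> * (1 - \<alpha>))) * x powr 1) / \<rho>
        * (u powr ((\<rho> * (\<eta> + 1) - 1) / \<rho>) * u powr (1/\<rho> - 1)) * (1 - u) powr (- (1 - \<alpha>))"
    unfolding katu_kernel_def num den using x u \<rho>
    by (simp add: powr_minus field_simps) (simp add: powr_add[symmetric])
  also have "\<dots> = x powr (\<rho> * (\<eta> + \<alpha>)) / \<rho> * (u powr \<eta> * (1 - u) powr (\<alpha> - 1))"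
  proof -
    have "\<rho> * (\<eta> + 1) - 1 + - (\<rho> * (1 - \<alpha>)) + 1 = \<rho> * (\<eta> + \<alpha>)"
      by (simp add: algebra_simps)
    moreover have "(\<rho> * (\<eta> + 1) - 1) / \<rho> + (1/\<rho> - 1) = \<eta>"
      using \<rho> by (simp add: field_simps)
    ultimately show ?thesis
      by (simp only: powr_add[symmetric] minus_diff_eq)
  qed
  finally show ?thesis .
qed

lemma set_integral_substitution_powr:
  fixes f :: "real \<Rightarrow> real" and x \<rho> :: real
  assumes x: "x > 0" and \<rho>: "\<rho> > 0"
    and f_cont: "\<And>\<tau>. 0 < \<tau> \<Longrightarrow> \<tau> < x \<Longrightarrow> isCont f \<tau>"
    and f_nonneg: "\<And>\<tau>. 0 < \<tau> \<Longrightarrow> \<tau> < x \<Longrightarrow> 0 \<le> f \<tau>"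
    and fg_integrable:
      "set_integrable lborel {0<..<1} (\<lambda>u. f (x * u powr (1/\<rho>)) * (x / \<rho> * u powr (1/\<rho> - 1)))"
  shows "(LINT \<tau>:{0..x}|lborel. f \<tau>)
       = (LINT u:{0<..<1}|lborel. f (x * u powr (1/\<rho>)) * (x / \<rho> * u powr (1/\<rho> - 1)))"
proof -
  define g where "g u = x * u powr (1/\<rho>)" for u
  define g' where "g' u = x / \<rho> * u powr (1/\<rho> - 1)" for u
  have g_deriv: "DERIV g u :> g' u" if "0 < u" for u
    unfolding g_def g'_def using that \<rho> by (auto intro!: derivative_eq_intros simp: field_simps)
  have g_range: "0 < g u \<and> g u < x" if "0 < u" "u < 1" for u
  proof -
    have "u powr (1/\<rho>) < 1 powr (1/\<rho>)"
      using that \<rho> by (intro powr_less_mono2) auto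
    then show ?thesis
      unfolding g_def using x that by auto
  qed
  have g'_cont: "isCont g' u" if "0 < u" for u
    unfolding g'_def using that \<rho> by (auto intro!: continuous_intros)
  have "(g \<longlongrightarrow> x * 0) (at_right 0)"
    unfolding g_def using \<rho>
    by (intro tendsto_mult tendsto_const tendsto_zero_powrI[where b="1/\<rho>"] tendsto_ident_at)
       (auto simp: eventually_at_filter)
  then have g_lim0: "((ereal \<circ> g \<circ> real_of_ereal) \<longlongrightarrow> ereal 0) (at_right (ereal 0))"
    by (simp add: ereal_tendsto_simps1 ereal_tendsto_simps2 comp_assoc[symmetric])
  have "(g \<longlongrightarrow> x * 1 powr (1/\<rho>)) (at_left 1)"
    unfolding g_def by (intro tendsto_intros) auto
  then have g_lim1: "((ereal \<circ> g \<circ> real_of_ereal) \<longlongrightarrow> ereal x) (at_left (ereal 1))"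
    by (simp add: ereal_tendsto_simps1 ereal_tendsto_simps2 comp_assoc[symmetric])
  have "(LINT \<tau>:{0..x}|lborel. f \<tau>) = (LBINT \<tau>=ereal 0..ereal x. f \<tau>)"
    using interval_integral_Icc[of 0 x f] x by simp
  also have "\<dots> = (LBINT u=ereal 0..ereal 1. f (g u) * g' u)"
    using g_deriv g_range g'_cont g_lim0 g_lim1 f_cont f_nonneg fg_integrable \<rho> x
    by (intro interval_integral_substitution_nonneg(2)[of "ereal 0" "ereal 1" g g' f "ereal 0" "ereal x"])
       (auto simp: g_def g'_def einterval_eq_Icc)
  also have "\<dots> = (LINT u:{0<..<1}|lborel. f (g u) * g' u)"
    by (simp add: interval_integral_Ioo)
  finally show ?thesis
    by (simp add: g_def g'_def)
qed

lemma integral_katu_kernel: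
  fixes \<rho> \<alpha> \<eta> x :: real
  assumes x: "x > 0" and \<rho>: "\<rho> > 0" and \<alpha>: "\<alpha> > 0" and \<eta>: "\<eta> > -1"
  shows "(LINT \<tau>:{0..x}|lborel. katu_kernel \<rho> \<alpha> \<eta> x \<tau>)
       = x powr (\<rho> * (\<eta> + \<alpha>)) / \<rho> * Beta (\<eta> + 1) \<alpha>"
proof -
  define C where "C = x powr (\<rho> * (\<eta> + \<alpha>)) / \<rho>"
  define B where "B = (\<lambda>u. u powr \<eta> * (1 - u) powr (\<alpha> - 1))"
  define K where "K u = katu_kernel \<rho> \<alpha> \<eta> x (x * u powr (1/\<rho>)) * (x / \<rho> * u powr (1/\<rho> - 1))" for u
  have K_eq: "K u = C * B u" if "0 < u" "u < 1" for u
    unfolding K_def C_def B_def using katu_kernel_substitution[OF x \<rho> that] .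
  have B_integrable: "set_integrable lborel {0..1} B"
    using integrable_Beta[of "\<eta> + 1" \<alpha>] \<eta> \<alpha> by (simp add: B_def)
  have "set_integrable lborel {0<..<1} (\<lambda>u. C * B u)"
    by (intro set_integrable_mult_right set_integrable_subset[OF B_integrable]) auto
  then have K_integrable: "set_integrable lborel {0<..<1} K"
    by (subst set_integrable_cong[OF refl refl]) (auto simp: K_eq)
  have kernel_cont: "isCont (katu_kernel \<rho> \<alpha> \<eta> x) \<tau>" if "0 < \<tau>" "\<tau> < x" for \<tau>
  proof -
    have "\<tau> powr \<rho> < x powr \<rho>"
      using that \<rho> by (simp add: powr_less_mono2)
    then show ?thesis
      unfolding katu_kernel_def using that by (auto intro!: continuous_intros)
  qed
  have "(LINT \<tau>:{0..x}|lborel. katu_kernel \<rho> \<alpha> \<eta> x \<tau>) = (LINT u:{0<..<1}|lborel. K u)"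
    using K_integrable kernel_cont unfolding K_def
    by (intro set_integral_substitution_powr[OF x \<rho>]) (auto simp: katu_kernel_nonneg)
  also have "\<dots> = (LINT u:{0<..<1}|lborel. C * B u)"
    by (rule set_lebesgue_integral_cong) (auto simp: K_eq)
  also have "\<dots> = C * (LINT u:{0..1}|lborel. B u)"
    using interval_integral_Ioo[of "ereal 0" "ereal 1" B] interval_integral_Icc[of 0 1 B]
    by (simp add: set_integral_mult_right)
  also have "(LINT u:{0..1}|lborel. B u) = Beta (\<eta> + 1) \<alpha>"
    using set_borel_integral_eq_integral(2)[OF B_integrable] has_integral_Beta_real[of "\<eta> + 1" \<alpha>] \<eta> \<alpha>
    by (simp add: B_def integral_unique)
  finally show ?thesis
    by (simp add: C_def)
qed

lemma not_integrable_on_ge_inverse: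
  fixes f :: "real \<Rightarrow> real"
  assumes b: "b > 0" and \<kappa>: "\<kappa> > 0"
    and f_nonneg: "\<And>\<tau>. 0 \<le> \<tau> \<Longrightarrow> \<tau> \<le> b \<Longrightarrow> 0 \<le> f \<tau>"
    and f_ge: "\<And>\<tau>. 0 < \<tau> \<Longrightarrow> \<tau> \<le> b \<Longrightarrow> \<kappa> / \<tau> \<le> f \<tau>"
  shows "\<not> f integrable_on {0..b}"
proof
  assume f_int: "f integrable_on {0..b}"
  define I where "I = integral {0..b} f"
  have "I / \<kappa> \<ge> 0"
    unfolding I_def using f_int f_nonneg \<kappa> by (intro divide_nonneg_pos integral_nonneg) auto
  \<comment> \<open>chosen so that \<open>\<kappa> ln (b/\<epsilon>)\<close>, the integral of \<open>\<kappa>/\<tau>\<close> over \<open>[\<epsilon>, b]\<close>, exceeds \<open>I\<close>\<close>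
  define \<epsilon> where "\<epsilon> = b * exp (- (I / \<kappa> + 1))"
  have \<epsilon>: "0 < \<epsilon>" "\<epsilon> < b"
    using b \<open>I / \<kappa> \<ge> 0\<close> by (auto simp: \<epsilon>_def)
  have FTC: "((\<lambda>\<tau>. \<kappa> / \<tau>) has_integral (\<kappa> * ln b - \<kappa> * ln \<epsilon>)) {\<epsilon>..b}"
  proof (rule fundamental_theorem_of_calculus)
    fix t assume "t \<in> {\<epsilon>..b}"
    then have "t > 0" using \<epsilon> by auto
    then show "((\<lambda>t. \<kappa> * ln t) has_vector_derivative \<kappa> / t) (at t within {\<epsilon>..b})"
      by (auto intro!: derivative_eq_intros simp flip: has_real_derivative_iff_has_vector_derivative)
  qed (use \<epsilon> in simp)
  have "\<kappa> * ln b - \<kappa> * ln \<epsilon> \<le> integral {\<epsilon>..b} f"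
    unfolding integral_unique[OF FTC, symmetric] using \<epsilon> f_ge
    by (intro integral_le has_integral_integrable[OF FTC] integrable_on_subinterval[OF f_int]) auto
  also have "\<dots> \<le> I"
    unfolding I_def using \<epsilon> f_nonneg
    by (intro integral_subset_le integrable_on_subinterval[OF f_int] f_int) auto
  finally have "\<kappa> * (ln b - ln \<epsilon>) \<le> I"
    by (simp add: algebra_simps)
  moreover have "\<kappa> * (ln b - ln \<epsilon>) = I + \<kappa>"
    using b \<kappa> by (simp add: \<epsilon>_def ln_mult field_simps)
  ultimately show False
    using \<kappa> by simp
qed

lemma katu_kernel_ge_inverse:
  fixes \<rho> \<alpha> \<eta> x :: real
  assumes x: "x > 0" and \<rho>: "\<rho> > 0" and \<eta>: "\<eta> \<le> -1"
  obtains \<kappa> where "\<kappa> > 0"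
    and "\<And>\<tau>. 0 < \<tau> \<Longrightarrow> \<tau> \<le> x / 2 \<Longrightarrow> \<kappa> / \<tau> \<le> katu_kernel \<rho> \<alpha> \<eta> x \<tau>"
proof
  define b where "b = x / 2"
  define c where "c = \<rho> * (\<eta> + 1)"
  have b: "0 < b" "b < x" and c: "c \<le> 0"
    using x \<rho> \<eta> by (auto simp: b_def c_def mult_nonneg_nonpos)
  have gap: "0 < x powr \<rho> - b powr \<rho>"
    using b \<rho> by (simp add: powr_less_mono2)
  define D where "D = max ((x powr \<rho>) powr (1 - \<alpha>)) ((x powr \<rho> - b powr \<rho>) powr (1 - \<alpha>))"
  show "b powr c / D > 0"
    using gap b by (auto simp: D_def less_max_iff_disj)
  fix \<tau> assume \<tau>: "0 < \<tau>" "\<tau> \<le> x / 2"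
  have lo: "x powr \<rho> - b powr \<rho> \<le> x powr \<rho> - \<tau> powr \<rho>"
    and hi: "x powr \<rho> - \<tau> powr \<rho> \<le> x powr \<rho>"
    using \<tau> \<rho> by (auto simp: b_def powr_mono2)
  have den_pos: "0 < (x powr \<rho> - \<tau> powr \<rho>) powr (1 - \<alpha>)"
    using lo gap by simp
  have den_le: "(x powr \<rho> - \<tau> powr \<rho>) powr (1 - \<alpha>) \<le> D"
  proof (cases "1 - \<alpha> \<ge> 0")
    case True
    then have "(x powr \<rho> - \<tau> powr \<rho>) powr (1 - \<alpha>) \<le> (x powr \<rho>) powr (1 - \<alpha>)"
      using lo hi gap by (intro powr_mono2) auto
    then show ?thesis by (simp add: D_def)
  next
    case False
    then have "(x powr \<rho> - \<tau> powr \<rho>) powr (1 - \<alpha>) \<le> (x powr \<rho> - b powr \<rho>) powr (1 - \<alpha>)"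
      using lo gap by (intro powr_mono2') auto
    then show ?thesis by (simp add: D_def)
  qed
  have "b powr c / \<tau> \<le> \<tau> powr c / \<tau>"
    using \<tau> c by (intro divide_right_mono powr_mono2') (auto simp: b_def)
  also have "\<dots> = \<tau> powr (c - 1)"
    using \<tau> by (simp add: powr_diff)
  finally have num: "b powr c / \<tau> \<le> \<tau> powr (\<rho> * (\<eta> + 1) - 1)"
    by (simp add: c_def)
  have "b powr c / D / \<tau> = (b powr c / \<tau>) / D"
    by simp
  also have "\<dots> \<le> katu_kernel \<rho> \<alpha> \<eta> x \<tau>"
    unfolding katu_kernel_def using num den_pos den_le \<tau> b
    by (intro frac_le) auto
  finally show "b powr c / D / \<tau> \<le> katu_kernel \<rho> \<alpha> \<eta> x \<tau>" .
qed

lemma set_integrable_katu_kernel_imp_gt: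
  fixes \<rho> \<alpha> \<eta> x :: real
  assumes x: "x > 0" and \<rho>: "\<rho> > 0"
    and int: "set_integrable lborel {0..x} (katu_kernel \<rho> \<alpha> \<eta> x)"
  shows "\<eta> > -1"
proof (rule ccontr)
  assume "\<not> \<eta> > -1"
  then obtain \<kappa> where "\<kappa> > 0"
    and "\<And>\<tau>. 0 < \<tau> \<Longrightarrow> \<tau> \<le> x / 2 \<Longrightarrow> \<kappa> / \<tau> \<le> katu_kernel \<rho> \<alpha> \<eta> x \<tau>"
    using katu_kernel_ge_inverse[OF x \<rho>] by (metis not_less)
  then have "\<not> katu_kernel \<rho> \<alpha> \<eta> x integrable_on {0..x / 2}"
    using x by (intro not_integrable_on_ge_inverse) (auto simp: katu_kernel_nonneg)
  moreover have "katu_kernel \<rho> \<alpha> \<eta> x integrable_on {0..x}"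
    using set_borel_integral_eq_integral(1)[OF int] .
  ultimately show False
    using x integrable_on_subinterval[of _ "{0..x}" 0 "x / 2"] by auto
qed

lemma katuJ_const:
  fixes \<rho> \<alpha> \<beta> \<eta> k x c :: real
  assumes x: "x > 0" and \<rho>: "\<rho> > 0" and \<alpha>: "\<alpha> > 0" and \<eta>: "\<eta> > -1"
  shows "katuJ \<rho> \<alpha> \<beta> \<eta> k (\<lambda>_. c) x = c * katuLambda \<rho> \<beta> x k \<alpha> \<eta>"
proof -
  have "katuJ \<rho> \<alpha> \<beta> \<eta> k (\<lambda>_. c) x
      = c * (\<rho> powr (1 - \<beta>) * x powr k / Gamma \<alpha>
        * (x powr (\<rho> * (\<eta> + \<alpha>)) / \<rho> * (Gamma (\<eta> + 1) * Gamma \<alpha> / Gamma (\<eta> + \<alpha> + 1))))"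
    unfolding katuJ_def by (simp add: integral_katu_kernel[OF x \<rho> \<alpha> \<eta>] Beta_def add_ac)
  also have "\<dots> = c * (Gamma (\<eta> + 1) / Gamma (\<eta> + \<alpha> + 1) * (\<rho> powr (1 - \<beta>) / \<rho>)
        * (x powr k * x powr (\<rho> * (\<eta> + \<alpha>))))"
    using \<alpha> by (simp add: Gamma_real_pos field_simps less_imp_neq[symmetric])
  also have "\<dots> = c * katuLambda \<rho> \<beta> x k \<alpha> \<eta>"
    using \<rho> by (simp add: katuLambda_def powr_diff powr_minus_divide flip: powr_add)
  finally show ?thesis .
qed

lemma katuJ_mono:
  fixes f g :: "real \<Rightarrow> real"
  assumes \<alpha>: "\<alpha> > 0"
    and f: "set_integrable lborel {0..x} (\<lambda>\<tau>. katu_kernel \<rho> \<alpha> \<eta> x \<tau> * f \<tau>)"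
    and g: "set_integrable lborel {0..x} (\<lambda>\<tau>. katu_kernel \<rho> \<alpha> \<eta> x \<tau> * g \<tau>)"
    and le: "\<And>\<tau>. 0 \<le> \<tau> \<Longrightarrow> \<tau> \<le> x \<Longrightarrow> f \<tau> \<le> g \<tau>"
  shows "katuJ \<rho> \<alpha> \<beta> \<eta> k f x \<le> katuJ \<rho> \<alpha> \<beta> \<eta> k g x"
  unfolding katuJ_def using \<alpha> f g le
  by (intro mult_left_mono set_integral_mono)
     (auto intro: mult_left_mono katu_kernel_nonneg simp: Gamma_real_pos)

lemma katuJ_bounds:
  fixes v :: "real \<Rightarrow> real"
  assumes x: "x > 0" and \<rho>: "\<rho> > 0" and \<alpha>: "\<alpha> > 0"
    and v_bounds: "\<And>\<tau>. 0 \<le> \<tau> \<Longrightarrow> \<tau> \<le> x \<Longrightarrow> m \<le> v \<tau> \<and> v \<tau> \<le> M"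
    and kernel_v: "set_integrable lborel {0..x} (\<lambda>\<tau>. katu_kernel \<rho> \<alpha> \<eta> x \<tau> * v \<tau>)"
    and kernel: "set_integrable lborel {0..x} (\<lambda>\<tau>. katu_kernel \<rho> \<alpha> \<eta> x \<tau>)"
  shows "m * katuLambda \<rho> \<beta> x k \<alpha> \<eta> \<le> katuJ \<rho> \<alpha> \<beta> \<eta> k v x"
    and "katuJ \<rho> \<alpha> \<beta> \<eta> k v x \<le> M * katuLambda \<rho> \<beta> x k \<alpha> \<eta>"
proof -
  have \<eta>: "\<eta> > -1"
    using set_integrable_katu_kernel_imp_gt[OF x \<rho>] kernel by simp
  have kernel_c: "set_integrable lborel {0..x} (\<lambda>\<tau>. katu_kernel \<rho> \<alpha> \<eta> x \<tau> * c)" for c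
    using kernel by (rule set_integrable_mult_left)
  show "m * katuLambda \<rho> \<beta> x k \<alpha> \<eta> \<le> katuJ \<rho> \<alpha> \<beta> \<eta> k v x"
    using katuJ_mono[OF \<alpha> kernel_c kernel_v, of m] v_bounds by (simp add: katuJ_const[OF x \<rho> \<alpha> \<eta>])
  show "katuJ \<rho> \<alpha> \<beta> \<eta> k v x \<le> M * katuLambda \<rho> \<beta> x k \<alpha> \<eta>"
    using katuJ_mono[OF \<alpha> kernel_v kernel_c, of M] v_bounds by (simp add: katuJ_const[OF x \<rho> \<alpha> \<eta>])
qed

theorem corollary1:
  fixes v :: "real \<Rightarrow> real" and m M x \<alpha> \<rho> \<delta> \<beta> \<eta> k lam :: real
  assumes v_int: "\<And>t. t > 0 \<Longrightarrow> set_integrable lborel {0..t} v"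
    and v_bounds: "\<And>t. t \<ge> 0 \<Longrightarrow> m \<le> v t \<and> v t \<le> M"
    and x_pos: "x > 0" and \<alpha>_pos: "\<alpha> > 0" and \<rho>_pos: "\<rho> > 0" and \<delta>_pos: "\<delta> > 0"
    and ex_J\<alpha>: "set_integrable lborel {0..x} (\<lambda>\<tau>. katu_kernel \<rho> \<alpha> \<eta> x \<tau> * v \<tau>)"
    and ex_J\<delta>: "set_integrable lborel {0..x} (\<lambda>\<tau>. katu_kernel \<rho> \<delta> \<eta> x \<tau> * v \<tau>)"
    and ex_J\<alpha>1: "set_integrable lborel {0..x} (\<lambda>\<tau>. katu_kernel \<rho> \<alpha> \<eta> x \<tau>)"
    and ex_J\<delta>1: "set_integrable lborel {0..x} (\<lambda>\<tau>. katu_kernel \<rho> \<delta> \<eta> x \<tau>)"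
  shows "M * katuLambda \<rho> \<beta> x k \<alpha> \<eta> * katuJ \<rho> \<delta> lam \<eta> k v x
           + m * katuLambda \<rho> lam x k \<delta> \<eta> * katuJ \<rho> \<alpha> \<beta> \<eta> k v x
         \<ge> katuJ \<rho> \<alpha> \<beta> \<eta> k v x * katuJ \<rho> \<delta> lam \<eta> k v x
           + m * M * katuLambda \<rho> \<beta> x k \<alpha> \<eta> * katuLambda \<rho> lam x k \<delta> \<eta>"
proof -
  have v_bounds_x: "\<And>\<tau>. 0 \<le> \<tau> \<Longrightarrow> \<tau> \<le> x \<Longrightarrow> m \<le> v \<tau> \<and> v \<tau> \<le> M"
    using v_bounds by simp
  have "katuJ \<rho> \<alpha> \<beta> \<eta> k v x \<le> M * katuLambda \<rho> \<beta> x k \<alpha> \<eta>"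
    by (rule katuJ_bounds(2)[OF x_pos \<rho>_pos \<alpha>_pos v_bounds_x ex_J\<alpha> ex_J\<alpha>1])
  moreover have "m * katuLambda \<rho> lam x k \<delta> \<eta> \<le> katuJ \<rho> \<delta> lam \<eta> k v x"
    by (rule katuJ_bounds(1)[OF x_pos \<rho>_pos \<delta>_pos v_bounds_x ex_J\<delta> ex_J\<delta>1])
  ultimately have "0 \<le> (M * katuLambda \<rho> \<beta> x k \<alpha> \<eta> - katuJ \<rho> \<alpha> \<beta> \<eta> k v x)
                      * (katuJ \<rho> \<delta> lam \<eta> k v x - m * katuLambda \<rho> lam x k \<delta> \<eta>)"
    by simp
  then show ?thesis
    by (simp add: algebra_simps)
qed

end
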